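(* In the setting described in the context, if $g_m$ is a $\Phi$-linear combination of elements of the form $w\,g(i,\varepsilon,\sigma)$, where $q_i\varepsilon\sigma\to q_jT_\alpha T_\beta$ is a command of $M$ and $w\in W_{\varepsilon\sigma}$, then $m\in S$.
   Context: $\Phi$ is a commutative ring with unity $1\ne0$, regarded as a differential ring with the commuting derivations $\delta_1,\delta_2$ acting as zero. $S\subseteq\mathbb{N}$ is recursively enumerable and $M$ is a two-tape acyclic Minsky machine with states $q_0,\ldots,q_n$ ($q_0$ terminal) such that for every $x\in\mathbb{N}$, starting at configuration $[1,2^{2^x},0]$, $M$ reaches $[0,1,0]$ in finitely many steps if $x\in S$ and operates infinitely if $x\notin S$. Minsky machine conventions: two tapes infinite to the right with cells $0,1,2,\ldots$; cell $0$ contains $1$, all others $0$; a configuration $[i,a,b]$ means state $q_i$, head at cell $a$ of tape 1 and cell $b$ of tape 2. Commands are $q_i\varepsilon\sigma\to q_jT_\alpha T_\beta$ with $1\le i\le n$, $0\le j\le n$, $\varepsilon,\sigma\in\{0,1\}$, $\alpha,\beta\in\{-1,0,1\}$, $\alpha\ge0$ if $\varepsilon=1$, $\beta\ge0$ if $\sigma=1$, at most one per triple $(i,\varepsilon,\sigma)$; such a command applies to $[i,a,b]$ when ($\varepsilon=1$ iff $a=0$) and ($\sigma=1$ iff $b=0$), producing $[j,a+\alpha,b+\beta]$. Acyclic means no configuration recurs after a positive number of steps. $A=\Phi\{x_1,x_2,q_0,\ldots,q_n\}$ is the differential polynomial ring w.r.t. $\delta_1,\delta_2$ (polynomial ring in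 independent variables $\delta_1^a\delta_2^b(y)$, $y\in\{x_1,x_2,q_0,\ldots,q_n\}$, $\delta_1,\delta_2$ raising the corresponding exponent). $J$ is the differential ideal generated by $\delta_1(x_2),\delta_2(x_1)$, and $B=A/J$ with induced derivations. For each command of $M$, $g(i,\varepsilon,\sigma)$ is the image in $B$ of $x_1^{\varepsilon}x_2^{\sigma}\delta_1^{1-\varepsilon}\delta_2^{1-\sigma}(q_i)-x_1^{\varepsilon}x_2^{\sigma}\delta_1^{1-\varepsilon+\alpha}\delta_2^{1-\sigma+\beta}(q_j)$; $g_m$ is the image of $x_1x_2\delta_1^{2^{2^m}}(q_1)-x_1x_2\delta_1(q_0)$. $B^e$ is the ring which is the free left $B$-module on the basis $\{\delta_1^i\delta_2^j: i,j\ge0\}$ with $\delta_l$ commuting and $\delta_l b=b\delta_l+\delta_l(b)$; $B$ is a left $B^e$-module ($b$ acting by multiplication, $\delta_l$ as derivations). $W_{\varepsilon\sigma}$ is the set of elements $x_1^{1-\varepsilon}x_2^{1-\sigma}\delta_1^i\delta_2^j\in B^e$ with $i,j\ge0$, $i=0$ if $\varepsilon=1$, $j=0$ if $\sigma=1$ (so $W_{11}=\{1\}$). *)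

theory Defs
  imports "HOL-Library.Poly_Mapping"
begin

text \<open>A command  q_i eps sigma -> q_j T_alpha T_beta  is the tuple (i, eps, sigma, j, alpha, beta),
  with eps, sigma in {0,1} (as naturals) and alpha, beta in {-1,0,1} (as integers).\<close>

type_synonym cmd = "nat \<times> nat \<times> nat \<times> nat \<times> int \<times> int"
type_synonym config = "nat \<times> nat \<times> nat"

definition valid_cmd :: "nat \<Rightarrow> cmd \<Rightarrow> bool" where
  "valid_cmd n c = (case c of (i, e, s, j, \<alpha>, \<beta>) \<Rightarrow>
     1 \<le> i \<and> i \<le> n \<and> j \<le> n \<and> e \<in> {0,1} \<and> s \<in> {0,1} \<and>
     \<alpha> \<in> {-1,0,1} \<and> \<beta> \<in> {-1,0,1} \<and> (e = 1 \<longrightarrow> \<alpha> \<ge> 0) \<and> (s = 1 \<longrightarrow> \<beta> \<ge> 0))"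

definition minsky_machine :: "nat \<Rightarrow> cmd set \<Rightarrow> bool" where
  "minsky_machine n M = ((\<forall>c\<in>M. valid_cmd n c) \<and>
     (\<forall>c\<in>M. \<forall>c'\<in>M. fst c = fst c' \<and> fst (snd c) = fst (snd c') \<and>
        fst (snd (snd c)) = fst (snd (snd c')) \<longrightarrow> c = c'))"

definition mstep :: "cmd set \<Rightarrow> config \<Rightarrow> config \<Rightarrow> bool" where
  "mstep M c c' = (case c of (i, a, b) \<Rightarrow> case c' of (j', a', b') \<Rightarrow>
     (\<exists>e s j \<alpha> \<beta>. (i, e, s, j, \<alpha>, \<beta>) \<in> M \<and> (e = 1 \<longleftrightarrow> a = 0) \<and> (s = 1 \<longleftrightarrow> b = 0) \<and>
        j' = j \<and> int a' = int a + \<alpha> \<and> int b' = int b + \<beta>))"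

definition acyclic_machine :: "cmd set \<Rightarrow> bool" where
  "acyclic_machine M = (\<forall>c. \<not> (mstep M)\<^sup>+\<^sup>+ c c)"

definition reaches :: "cmd set \<Rightarrow> config \<Rightarrow> config \<Rightarrow> bool" where
  "reaches M c d = (mstep M)\<^sup>*\<^sup>* c d"

definition runs_forever :: "cmd set \<Rightarrow> config \<Rightarrow> bool" where
  "runs_forever M c = (\<forall>d. (mstep M)\<^sup>*\<^sup>* c d \<longrightarrow> (\<exists>d'. mstep M d d'))"

datatype base = X1 | X2 | Q nat

text \<open>The variable (y, a, b) stands for delta_1^a delta_2^b (y).\<close>
type_synonym dvar = "base \<times> nat \<times> nat"

type_synonym 'a dpoly = "(dvar \<Rightarrow>\<^sub>0 nat) \<Rightarrow>\<^sub>0 'a"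

definition allowed_var :: "nat \<Rightarrow> dvar \<Rightarrow> bool" where
  "allowed_var n v = (case fst v of Q i \<Rightarrow> i \<le> n | _ \<Rightarrow> True)"

definition A_carrier :: "nat \<Rightarrow> 'a::comm_ring_1 dpoly set" where
  "A_carrier n = {p :: 'a dpoly. \<forall>mn\<in>Poly_Mapping.keys p. \<forall>v\<in>Poly_Mapping.keys mn. allowed_var n v}"

definition V :: "dvar \<Rightarrow> 'a::comm_ring_1 dpoly" where
  "V v = Poly_Mapping.single (Poly_Mapping.single v 1) 1"

definition const :: "'a::comm_ring_1 \<Rightarrow> 'a dpoly" where
  "const c = Poly_Mapping.single 0 c"

definition sh1 :: "dvar \<Rightarrow> dvar" where "sh1 v = (case v of (y, a, b) \<Rightarrow> (y, Suc a, b))"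
definition sh2 :: "dvar \<Rightarrow> dvar" where "sh2 v = (case v of (y, a, b) \<Rightarrow> (y, a, Suc b))"

text \<open>The derivation of the polynomial ring determined by a map on variables
  (delta(var) = var'), extended by the Leibniz rule and Phi-linearity.\<close>
definition dderiv :: "(dvar \<Rightarrow> dvar) \<Rightarrow> 'a::comm_ring_1 dpoly \<Rightarrow> 'a dpoly" where
  "dderiv d p = (\<Sum>m\<in>Poly_Mapping.keys p. \<Sum>v\<in>Poly_Mapping.keys m.
      Poly_Mapping.single (m - Poly_Mapping.single v 1 + Poly_Mapping.single (d v) 1)
                          (Poly_Mapping.lookup p m * of_nat (Poly_Mapping.lookup m v)))"

definition delta1 :: "'a::comm_ring_1 dpoly \<Rightarrow> 'a dpoly" where "delta1 = dderiv sh1"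
definition delta2 :: "'a::comm_ring_1 dpoly \<Rightarrow> 'a dpoly" where "delta2 = dderiv sh2"

definition x1 :: "'a::comm_ring_1 dpoly" where "x1 = V (X1, 0, 0)"
definition x2 :: "'a::comm_ring_1 dpoly" where "x2 = V (X2, 0, 0)"
definition q :: "nat \<Rightarrow> 'a::comm_ring_1 dpoly" where "q i = V (Q i, 0, 0)"

definition diff_ideal :: "nat \<Rightarrow> 'a::comm_ring_1 dpoly set \<Rightarrow> 'a dpoly set" where
  "diff_ideal n G = \<Inter> {I. I \<subseteq> A_carrier n \<and> G \<subseteq> I \<and> 0 \<in> I \<and>
       (\<forall>a\<in>I. \<forall>b\<in>I. a + b \<in> I) \<and> (\<forall>r\<in>A_carrier n. \<forall>a\<in>I. r * a \<in> I) \<and>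
       (\<forall>a\<in>I. delta1 a \<in> I) \<and> (\<forall>a\<in>I. delta2 a \<in> I)}"

definition J :: "nat \<Rightarrow> 'a::comm_ring_1 dpoly set" where
  "J n = diff_ideal n {delta1 x2, delta2 x1}"

text \<open>B = A/J: elements of B are represented by elements of A; two represent the same
  element of B iff their difference lies in J.\<close>
definition B_eq :: "nat \<Rightarrow> 'a::comm_ring_1 dpoly \<Rightarrow> 'a dpoly \<Rightarrow> bool" where
  "B_eq n a b = (a - b \<in> J n)"

definition gcmd :: "cmd \<Rightarrow> 'a::comm_ring_1 dpoly" where
  "gcmd c = (case c of (i, e, s, j, \<alpha>, \<beta>) \<Rightarrow>
     x1 ^ e * x2 ^ s * V (Q i, 1 - e, 1 - s)
     - x1 ^ e * x2 ^ s * V (Q j, nat (1 - int e + \<alpha>), nat (1 - int s + \<beta>)))"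

definition gm :: "nat \<Rightarrow> 'a::comm_ring_1 dpoly" where
  "gm m = x1 * x2 * V (Q 1, 2 ^ (2 ^ m), 0) - x1 * x2 * V (Q 0, 1, 0)"

text \<open>w = x_1^(1-eps) x_2^(1-sigma) delta_1^a delta_2^b is in W_{eps sigma} iff
  (eps = 1 --> a = 0) and (sigma = 1 --> b = 0).\<close>
definition inW :: "nat \<Rightarrow> nat \<Rightarrow> nat \<Rightarrow> nat \<Rightarrow> bool" where
  "inW e s a b = ((e = 1 \<longrightarrow> a = 0) \<and> (s = 1 \<longrightarrow> b = 0))"

definition actW :: "nat \<Rightarrow> nat \<Rightarrow> nat \<Rightarrow> nat \<Rightarrow> 'a::comm_ring_1 dpoly \<Rightarrow> 'a dpoly" where
  "actW e s a b f = x1 ^ (1 - e) * x2 ^ (1 - s) * (delta1 ^^ a) ((delta2 ^^ b) f)"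

definition cmd_e :: "cmd \<Rightarrow> nat" where "cmd_e c = fst (snd c)"
definition cmd_s :: "cmd \<Rightarrow> nat" where "cmd_s c = fst (snd (snd c))"

end

theory Submission
  imports Defs
begin

text \<open>Call a monomial of A null if it contains a variable delta_2^b x_1 with b > 0 or
  delta_1^a x_2 with a > 0. Null monomials span a differential ideal containing the generators
  of J, so every element of J is a combination of null monomials. Modulo null monomials,
  w g(i,eps,sigma) with w = x_1^(1-eps) x_2^(1-sigma) delta_1^a delta_2^b equals
  x_1 x_2 q_c - x_1 x_2 q_c', where x_1 x_2 q_[i,a',b'] denotes x_1 x_2 delta_1^a' delta_2^b' q_i,
  c = [i, 1-eps+a, 1-sigma+b] and c' is the successor of c under the command. As M is
  deterministic, the set C of configurations whose run merges with the run from [1, 2^2^m, 0]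
  is closed under steps in both directions, so the functional summing the coefficients of the
  monomials x_1 x_2 q_c with c in C vanishes on J and on every w g(i,eps,sigma). If m is not
  in S that run never halts, so [0,1,0] is not in C and the functional takes the value 1 on g_m.\<close>

definition supported_on :: "((dvar \<Rightarrow>\<^sub>0 nat) \<Rightarrow> bool) \<Rightarrow> 'a::comm_ring_1 dpoly \<Rightarrow> bool" where
  "supported_on P p \<longleftrightarrow> (\<forall>m\<in>Poly_Mapping.keys p. P m)"

lemma supported_on_0 [simp]: "supported_on P 0"
  by (simp add: supported_on_def)

lemma supported_on_add: "supported_on P p \<Longrightarrow> supported_on P r \<Longrightarrow> supported_on P (p + r)"
  unfolding supported_on_def using keys_add[of p r] by auto

lemma supported_on_diff: "supported_on P p \<Longrightarrow> supported_on P r \<Longrightarrow> supported_on P (p - r)"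
  unfolding supported_on_def using keys_diff[of p r] by auto

lemma supported_on_single: "P m \<Longrightarrow> supported_on P (Poly_Mapping.single m c)"
  by (simp add: supported_on_def)

lemma supported_on_V: "P (Poly_Mapping.single v 1) \<Longrightarrow> supported_on P (V v)"
  unfolding V_def by (rule supported_on_single)

lemma supported_on_sum: "(\<And>x. x \<in> A \<Longrightarrow> supported_on P (f x)) \<Longrightarrow> supported_on P (sum f A)"
  by (induction A rule: infinite_finite_induct) (auto intro: supported_on_add)

lemma supported_on_mult:
  assumes "\<And>m1 m2. P1 m1 \<Longrightarrow> P2 m2 \<Longrightarrow> P3 (m1 + m2)" "supported_on P1 r" "supported_on P2 p"
  shows "supported_on P3 (r * p)"
  using assms keys_mult[of r p] unfolding supported_on_def by fastforce

lemma dderiv_eq_sum_over: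
  assumes "finite F" "Poly_Mapping.keys p \<subseteq> F"
  shows "dderiv d p = (\<Sum>m\<in>F. \<Sum>v\<in>Poly_Mapping.keys m.
      Poly_Mapping.single (m - Poly_Mapping.single v 1 + Poly_Mapping.single (d v) 1)
                          (Poly_Mapping.lookup p m * of_nat (Poly_Mapping.lookup m v)))"
  unfolding dderiv_def by (rule sum.mono_neutral_left[OF assms]) (auto simp: in_keys_iff)

lemma dderiv_diff: "dderiv d (p - r) = dderiv d p - dderiv d r"
proof -
  let ?F = "Poly_Mapping.keys p \<union> Poly_Mapping.keys r"
  have F: "finite ?F" by simp
  show ?thesis
    unfolding dderiv_eq_sum_over[OF F keys_diff] dderiv_eq_sum_over[OF F Un_upper1]
      dderiv_eq_sum_over[OF F Un_upper2]
    by (simp add: lookup_minus left_diff_distrib single_diff sum_subtractf)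
qed

lemma dderiv_single: "dderiv d (Poly_Mapping.single m c) = (\<Sum>v\<in>Poly_Mapping.keys m.
      Poly_Mapping.single (m - Poly_Mapping.single v 1 + Poly_Mapping.single (d v) 1)
                          (c * of_nat (Poly_Mapping.lookup m v)))"
  by (subst dderiv_eq_sum_over[of "{m}"]) auto

lemma dderiv_V: "dderiv d (V v) = V (d v)"
  unfolding V_def dderiv_single by simp

lemma dderiv_V_mult_V:
  assumes "u \<noteq> v"
  shows "dderiv d (V u * V v) = (V (d u) * V v + V u * V (d v) :: 'a::comm_ring_1 dpoly)"
proof -
  have keys: "Poly_Mapping.keys (Poly_Mapping.single u 1 + Poly_Mapping.single v (1::nat)) = {u, v}"
    using assms by (auto simp: in_keys_iff lookup_add lookup_single when_def split: if_splits)
  show ?thesis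
    unfolding V_def mult_single dderiv_single keys
    using assms by (simp add: lookup_add lookup_single add.commute)
qed

lemma supported_on_dderiv:
  assumes "\<And>m v. P m \<Longrightarrow> v \<in> Poly_Mapping.keys m \<Longrightarrow>
      P (m - Poly_Mapping.single v 1 + Poly_Mapping.single (d v) 1)"
    and "supported_on P p"
  shows "supported_on P (dderiv d p)"
  unfolding dderiv_def
proof (intro supported_on_sum supported_on_single)
  fix m v assume "m \<in> Poly_Mapping.keys p" "v \<in> Poly_Mapping.keys m"
  then show "P (m - Poly_Mapping.single v 1 + Poly_Mapping.single (d v) 1)"
    using assms unfolding supported_on_def by blast
qed

lemma funpow_diff:
  fixes f :: "'a::ab_group_add \<Rightarrow> 'a"
  assumes "\<And>p r. f (p - r) = f p - f r"
  shows "(f ^^ k) (p - r) = (f ^^ k) p - (f ^^ k) r"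
  by (induction k) (simp_all add: assms)

lemma funpow_delta1_diff: "(delta1 ^^ k) (p - r) = (delta1 ^^ k) p - (delta1 ^^ k) r"
  by (rule funpow_diff) (simp add: delta1_def dderiv_diff)

lemma funpow_delta2_diff: "(delta2 ^^ k) (p - r) = (delta2 ^^ k) p - (delta2 ^^ k) r"
  by (rule funpow_diff) (simp add: delta2_def dderiv_diff)

lemma funpow_delta1_V: "(delta1 ^^ k) (V (y, a, b)) = (V (y, a + k, b) :: 'a::comm_ring_1 dpoly)"
  by (induction k) (auto simp: delta1_def dderiv_V sh1_def)

lemma funpow_delta2_V: "(delta2 ^^ k) (V (y, a, b)) = (V (y, a, b + k) :: 'a::comm_ring_1 dpoly)"
  by (induction k) (auto simp: delta2_def dderiv_V sh2_def)

subsection \<open>Null monomials and the ideal J\<close>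

fun null_var :: "dvar \<Rightarrow> bool" where
  "null_var (X1, a, b) \<longleftrightarrow> 0 < b"
| "null_var (X2, a, b) \<longleftrightarrow> 0 < a"
| "null_var (Q i, a, b) \<longleftrightarrow> False"

definition null_monom :: "(dvar \<Rightarrow>\<^sub>0 nat) \<Rightarrow> bool" where
  "null_monom m \<longleftrightarrow> (\<exists>v\<in>Poly_Mapping.keys m. null_var v)"

abbreviation null_supported :: "'a::comm_ring_1 dpoly \<Rightarrow> bool" where
  "null_supported \<equiv> supported_on null_monom"

definition allowed_monom :: "nat \<Rightarrow> (dvar \<Rightarrow>\<^sub>0 nat) \<Rightarrow> bool" where
  "allowed_monom n m \<longleftrightarrow> (\<forall>v\<in>Poly_Mapping.keys m. allowed_var n v)"

lemma A_carrier_eq: "A_carrier n = {p. supported_on (allowed_monom n) p}"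
  unfolding A_carrier_def supported_on_def allowed_monom_def by simp

lemma null_monom_add: "null_monom m2 \<Longrightarrow> null_monom (m1 + m2)"
  unfolding null_monom_def by (auto simp: in_keys_iff lookup_add)

lemma null_supported_mult: "null_supported p \<Longrightarrow> null_supported (r * p)"
  by (rule supported_on_mult[of "\<lambda>_. True" null_monom]) (auto simp: supported_on_def intro: null_monom_add)

lemma null_monom_shift:
  assumes "null_monom m" "v \<in> Poly_Mapping.keys m" "\<And>u. null_var u \<Longrightarrow> null_var (d u)"
  shows "null_monom (m - Poly_Mapping.single v 1 + Poly_Mapping.single (d v) 1)"
proof -
  obtain u where u: "u \<in> Poly_Mapping.keys m" "null_var u"
    using assms(1) null_monom_def by blast
  show ?thesis
  proof (cases "u = v")
    case True
    then have "d v \<in> Poly_Mapping.keys (m - Poly_Mapping.single v 1 + Poly_Mapping.single (d v) 1)"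
      by (auto simp: in_keys_iff lookup_add lookup_minus lookup_single when_def)
    then show ?thesis using assms(3) u True unfolding null_monom_def by blast
  next
    case False
    then have "u \<in> Poly_Mapping.keys (m - Poly_Mapping.single v 1 + Poly_Mapping.single (d v) 1)"
      using u(1) by (auto simp: in_keys_iff lookup_add lookup_minus lookup_single when_def)
    then show ?thesis using u unfolding null_monom_def by blast
  qed
qed

lemma allowed_monom_shift:
  assumes "allowed_monom n m" "v \<in> Poly_Mapping.keys m" "fst (d v) = fst v"
  shows "allowed_monom n (m - Poly_Mapping.single v 1 + Poly_Mapping.single (d v) 1)"
proof -
  have "Poly_Mapping.keys (m - Poly_Mapping.single v 1 + Poly_Mapping.single (d v) 1)
        \<subseteq> Poly_Mapping.keys m \<union> {d v}"
    by (auto simp: in_keys_iff lookup_add lookup_minus lookup_single when_def split: if_splits)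
  moreover have "allowed_var n (d v)"
    using assms unfolding allowed_monom_def allowed_var_def by auto
  ultimately show ?thesis using assms(1) unfolding allowed_monom_def by blast
qed

lemma null_var_sh1: "null_var u \<Longrightarrow> null_var (sh1 u)"
  by (cases u rule: null_var.cases) (auto simp: sh1_def)

lemma null_var_sh2: "null_var u \<Longrightarrow> null_var (sh2 u)"
  by (cases u rule: null_var.cases) (auto simp: sh2_def)

lemma null_supported_delta1: "null_supported p \<Longrightarrow> null_supported (delta1 p)"
  unfolding delta1_def by (rule supported_on_dderiv) (blast intro: null_monom_shift null_var_sh1)+

lemma null_supported_delta2: "null_supported p \<Longrightarrow> null_supported (delta2 p)"
  unfolding delta2_def by (rule supported_on_dderiv) (blast intro: null_monom_shift null_var_sh2)+

lemma fst_sh1: "fst (sh1 v) = fst v"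
  by (simp add: sh1_def split: prod.splits)

lemma fst_sh2: "fst (sh2 v) = fst v"
  by (simp add: sh2_def split: prod.splits)

lemma allowed_delta1: "supported_on (allowed_monom n) p \<Longrightarrow> supported_on (allowed_monom n) (delta1 p)"
  unfolding delta1_def
  by (rule supported_on_dderiv) (blast intro: allowed_monom_shift fst_sh1)+

lemma allowed_delta2: "supported_on (allowed_monom n) p \<Longrightarrow> supported_on (allowed_monom n) (delta2 p)"
  unfolding delta2_def
  by (rule supported_on_dderiv) (blast intro: allowed_monom_shift fst_sh2)+

lemma J_null_supported:
  assumes "p \<in> J n"
  shows "null_supported p"
proof -
  let ?I = "{p :: 'a::comm_ring_1 dpoly. supported_on (allowed_monom n) p \<and> null_supported p}"
  have generators: "delta1 x2 = (V (X2, 1, 0) :: 'a dpoly)" "delta2 x1 = (V (X1, 0, 1) :: 'a dpoly)"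
    unfolding delta1_def delta2_def x1_def x2_def dderiv_V by (simp_all add: sh1_def sh2_def)
  have allowed_mult: "supported_on (allowed_monom n) (r * a)"
    if "supported_on (allowed_monom n) r" "supported_on (allowed_monom n) a" for r a :: "'a dpoly"
    using that by (rule supported_on_mult[rotated])
      (auto simp: allowed_monom_def dest: set_mp[OF keys_add])
  have "J n \<subseteq> ?I"
    unfolding J_def diff_ideal_def
  proof (rule Inter_lower, intro CollectI conjI)
    show "?I \<subseteq> A_carrier n" unfolding A_carrier_eq by auto
    show "{delta1 x2, delta2 x1} \<subseteq> ?I" unfolding generators
      by (auto intro!: supported_on_V simp: allowed_monom_def allowed_var_def null_monom_def)
    show "\<forall>r\<in>A_carrier n. \<forall>a\<in>?I. r * a \<in> ?I"
      unfolding A_carrier_eq by (auto intro: allowed_mult null_supported_mult)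
  qed (auto intro: supported_on_add null_supported_delta1 null_supported_delta2
      allowed_delta1 allowed_delta2)
  then show ?thesis using assms by auto
qed

lemma null_supported_V_null_var: "null_var v \<Longrightarrow> null_supported (V v)"
  by (rule supported_on_V) (simp add: null_monom_def)

lemma null_supported_delta2_x1_V:
  assumes "y \<noteq> X1"
  shows "null_supported (delta2 (x1 * V (y, a, b)) - x1 * V (y, a, Suc b) :: 'a::comm_ring_1 dpoly)"
proof -
  have "delta2 (x1 * V (y, a, b)) - x1 * V (y, a, Suc b) = V (y, a, b) * (V (X1, 0, 1) :: 'a dpoly)"
    unfolding delta2_def x1_def using assms by (simp add: dderiv_V_mult_V sh2_def mult.commute)
  then show ?thesis by (simp add: null_supported_mult null_supported_V_null_var)
qed

lemma null_supported_delta1_x2_V: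
  assumes "y \<noteq> X2"
  shows "null_supported (delta1 (x2 * V (y, a, b)) - x2 * V (y, Suc a, b) :: 'a::comm_ring_1 dpoly)"
proof -
  have "delta1 (x2 * V (y, a, b)) - x2 * V (y, Suc a, b) = V (y, a, b) * (V (X2, 1, 0) :: 'a dpoly)"
    unfolding delta1_def x2_def using assms by (simp add: dderiv_V_mult_V sh1_def mult.commute)
  then show ?thesis by (simp add: null_supported_mult null_supported_V_null_var)
qed

lemma null_supported_funpow_delta2_x1_V:
  assumes "y \<noteq> X1"
  shows "null_supported ((delta2 ^^ k) (x1 * V (y, a, b)) - x1 * V (y, a, b + k) :: 'a::comm_ring_1 dpoly)"
proof (induction k)
  case (Suc k)
  let ?D = "(delta2 ^^ k) (x1 * V (y, a, b)) :: 'a dpoly"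
  have "(delta2 ^^ Suc k) (x1 * V (y, a, b)) - x1 * V (y, a, b + Suc k)
      = delta2 (?D - x1 * V (y, a, b + k)) + (delta2 (x1 * V (y, a, b + k)) - x1 * V (y, a, Suc (b + k)))"
    by (simp add: delta2_def dderiv_diff)
  then show ?case
    using Suc null_supported_delta2 null_supported_delta2_x1_V[OF assms] supported_on_add by metis
qed simp

lemma null_supported_funpow_delta1_x2_V:
  assumes "y \<noteq> X2"
  shows "null_supported ((delta1 ^^ k) (x2 * V (y, a, b)) - x2 * V (y, a + k, b) :: 'a::comm_ring_1 dpoly)"
proof (induction k)
  case (Suc k)
  let ?D = "(delta1 ^^ k) (x2 * V (y, a, b)) :: 'a dpoly"
  have "(delta1 ^^ Suc k) (x2 * V (y, a, b)) - x2 * V (y, a + Suc k, b)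
      = delta1 (?D - x2 * V (y, a + k, b)) + (delta1 (x2 * V (y, a + k, b)) - x2 * V (y, Suc (a + k), b))"
    by (simp add: delta1_def dderiv_diff)
  then show ?case
    using Suc null_supported_delta1 null_supported_delta1_x2_V[OF assms] supported_on_add by metis
qed simp

subsection \<open>The generators modulo null monomials\<close>

lemma actW_diff: "actW e s a b (p - r) = actW e s a b p - actW e s a b r"
  unfolding actW_def funpow_delta1_diff funpow_delta2_diff by (simp add: right_diff_distrib)

lemma null_supported_actW_monom:
  assumes "inW e s a b" "e \<le> 1" "s \<le> 1"
  shows "null_supported (actW e s a b (x1 ^ e * x2 ^ s * V (Q k, p, r))
           - x1 * x2 * V (Q k, p + a, r + b) :: 'a::comm_ring_1 dpoly)"
proof -
  consider "e = 0" "s = 0" | "e = 1" "s = 1" "a = 0" "b = 0" | "e = 1" "s = 0" "a = 0" | "e = 0" "s = 1" "b = 0"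
    using assms unfolding inW_def by fastforce
  then show ?thesis
  proof cases
    case 3
    have "actW e s a b (x1 ^ e * x2 ^ s * V (Q k, p, r)) - x1 * x2 * V (Q k, p + a, r + b)
        = x2 * ((delta2 ^^ b) (x1 * V (Q k, p, r)) - x1 * V (Q k, p, r + b) :: 'a dpoly)"
      using 3 by (simp add: actW_def algebra_simps)
    then show ?thesis by (simp add: null_supported_mult null_supported_funpow_delta2_x1_V)
  next
    case 4
    have "actW e s a b (x1 ^ e * x2 ^ s * V (Q k, p, r)) - x1 * x2 * V (Q k, p + a, r + b)
        = x1 * ((delta1 ^^ a) (x2 * V (Q k, p, r)) - x2 * V (Q k, p + a, r) :: 'a dpoly)"
      using 4 by (simp add: actW_def algebra_simps)
    then show ?thesis by (simp add: null_supported_mult null_supported_funpow_delta1_x2_V)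
  qed (simp_all add: actW_def funpow_delta1_V funpow_delta2_V)
qed

fun source_config :: "cmd \<Rightarrow> nat \<Rightarrow> nat \<Rightarrow> config" where
  "source_config (i, e, s, j, \<alpha>, \<beta>) a b = (i, 1 - e + a, 1 - s + b)"

fun target_config :: "cmd \<Rightarrow> nat \<Rightarrow> nat \<Rightarrow> config" where
  "target_config (i, e, s, j, \<alpha>, \<beta>) a b = (j, nat (1 - int e + \<alpha>) + a, nat (1 - int s + \<beta>) + b)"

fun config_monom :: "config \<Rightarrow> (dvar \<Rightarrow>\<^sub>0 nat)" where
  "config_monom (i, a, b) = Poly_Mapping.single (X1, 0, 0) 1 + Poly_Mapping.single (X2, 0, 0) 1
      + Poly_Mapping.single (Q i, a, b) 1"

lemma x1_x2_V_Q: "x1 * x2 * V (Q i, a, b) = Poly_Mapping.single (config_monom (i, a, b)) (1 :: 'a::comm_ring_1)"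
  unfolding x1_def x2_def V_def by (simp add: mult_single)

lemma null_supported_actW_gcmd:
  assumes "valid_cmd n c" "inW (cmd_e c) (cmd_s c) a b"
  shows "null_supported (actW (cmd_e c) (cmd_s c) a b (gcmd c)
      - (Poly_Mapping.single (config_monom (source_config c a b)) 1
         - Poly_Mapping.single (config_monom (target_config c a b)) (1 :: 'a::comm_ring_1)))"
proof -
  obtain i e s j \<alpha> \<beta> where c: "c = (i, e, s, j, \<alpha>, \<beta>)" by (cases c) auto
  have es: "e \<le> 1" "s \<le> 1" "inW e s a b"
    using assms unfolding c valid_cmd_def cmd_e_def cmd_s_def by auto
  let ?act = "\<lambda>p :: 'a dpoly. actW e s a b (x1 ^ e * x2 ^ s * p)"
  have "actW e s a b (gcmd c) - (Poly_Mapping.single (config_monom (source_config c a b)) 1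
         - Poly_Mapping.single (config_monom (target_config c a b)) 1)
      = (?act (V (Q i, 1 - e, 1 - s)) - x1 * x2 * V (Q i, 1 - e + a, 1 - s + b))
        - (?act (V (Q j, nat (1 - int e + \<alpha>), nat (1 - int s + \<beta>)))
           - x1 * x2 * V (Q j, nat (1 - int e + \<alpha>) + a, nat (1 - int s + \<beta>) + b))"
    unfolding c gcmd_def x1_x2_V_Q by (simp add: actW_diff)
  then show ?thesis
    unfolding c cmd_e_def cmd_s_def
    by (simp add: supported_on_diff null_supported_actW_monom[OF es(3,1,2)])
qed

lemma mstep_source_target:
  assumes "c \<in> M" "valid_cmd n c" "inW (cmd_e c) (cmd_s c) a b"
  shows "mstep M (source_config c a b) (target_config c a b)"
proof -
  obtain i e s j \<alpha> \<beta> where c: "c = (i, e, s, j, \<alpha>, \<beta>)" by (cases c) auto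
  have e: "e = 0 \<and> \<alpha> \<ge> -1 \<or> e = 1 \<and> \<alpha> \<ge> 0 \<and> a = 0"
    and s: "s = 0 \<and> \<beta> \<ge> -1 \<or> s = 1 \<and> \<beta> \<ge> 0 \<and> b = 0"
    using assms(2,3) unfolding c valid_cmd_def inW_def cmd_e_def cmd_s_def by auto
  have "int (nat (1 - int e + \<alpha>) + a) = int (1 - e + a) + \<alpha>"
    "int (nat (1 - int s + \<beta>) + b) = int (1 - s + b) + \<beta>"
    "e = 1 \<longleftrightarrow> 1 - e + a = 0" "s = 1 \<longleftrightarrow> 1 - s + b = 0"
    using e s by auto
  then show ?thesis
    using assms(1) unfolding c mstep_def by auto
qed

subsection \<open>Runs of the machine\<close>

lemma mstep_deterministic:
  assumes M: "minsky_machine n M" and "mstep M c d1" "mstep M c d2"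
  shows "d1 = d2"
proof -
  obtain i a b where c: "c = (i, a, b)" by (cases c)
  obtain j1 a1 b1 j2 a2 b2 where d: "d1 = (j1, a1, b1)" "d2 = (j2, a2, b2)" by (cases d1, cases d2)
  obtain e1 s1 \<alpha>1 \<beta>1 e2 s2 \<alpha>2 \<beta>2 where
    cmds: "(i, e1, s1, j1, \<alpha>1, \<beta>1) \<in> M" "(i, e2, s2, j2, \<alpha>2, \<beta>2) \<in> M"
    and guards: "e1 = 1 \<longleftrightarrow> a = 0" "s1 = 1 \<longleftrightarrow> b = 0" "e2 = 1 \<longleftrightarrow> a = 0" "s2 = 1 \<longleftrightarrow> b = 0"
    and moves: "int a1 = int a + \<alpha>1" "int b1 = int b + \<beta>1" "int a2 = int a + \<alpha>2" "int b2 = int b + \<beta>2"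
    using assms(2,3) unfolding c d mstep_def by auto
  have "e1 \<in> {0, 1}" "s1 \<in> {0, 1}" "e2 \<in> {0, 1}" "s2 \<in> {0, 1}"
    using M cmds unfolding minsky_machine_def valid_cmd_def by auto
  then have "e1 = e2" "s1 = s2" using guards by auto
  then have "(i, e1, s1, j1, \<alpha>1, \<beta>1) = (i, e2, s2, j2, \<alpha>2, \<beta>2)"
    using M cmds unfolding minsky_machine_def by (metis fst_conv snd_conv)
  then show ?thesis using moves unfolding d by simp
qed

definition merging_configs :: "cmd set \<Rightarrow> config \<Rightarrow> config set" where
  "merging_configs M c0 = {c. \<exists>z. (mstep M)\<^sup>*\<^sup>* c0 z \<and> (mstep M)\<^sup>*\<^sup>* c z}"

lemma start_in_merging_configs: "c0 \<in> merging_configs M c0"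
  unfolding merging_configs_def by blast

lemma merging_configs_step_iff:
  assumes M: "minsky_machine n M" and step: "mstep M c c'"
  shows "c \<in> merging_configs M c0 \<longleftrightarrow> c' \<in> merging_configs M c0"
proof
  assume "c' \<in> merging_configs M c0"
  then show "c \<in> merging_configs M c0"
    using step unfolding merging_configs_def by (blast intro: converse_rtranclp_into_rtranclp)
next
  assume "c \<in> merging_configs M c0"
  then obtain z where z: "(mstep M)\<^sup>*\<^sup>* c0 z" "(mstep M)\<^sup>*\<^sup>* c z"
    unfolding merging_configs_def by blast
  from z(2) show "c' \<in> merging_configs M c0"
  proof (cases rule: converse_rtranclpE)
    case base
    then show ?thesis using z(1) step unfolding merging_configs_def by (blast intro: rtranclp.rtrancl_into_rtrancl)
  next
    case (step y)
    then have "y = c'" using mstep_deterministic[OF M] \<open>mstep M c c'\<close> by blast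
    then show ?thesis using z(1) step unfolding merging_configs_def by blast
  qed
qed

lemma no_mstep_from_terminal:
  assumes "minsky_machine n M"
  shows "\<not> mstep M (0, a, b) d"
  using assms unfolding minsky_machine_def valid_cmd_def mstep_def by (fastforce split: prod.splits)

lemma terminal_not_in_merging_configs:
  assumes M: "minsky_machine n M" and forever: "runs_forever M c0"
  shows "(0, a, b) \<notin> merging_configs M c0"
proof
  assume "(0, a, b) \<in> merging_configs M c0"
  then obtain z where z: "(mstep M)\<^sup>*\<^sup>* c0 z" "(mstep M)\<^sup>*\<^sup>* (0, a, b) z"
    unfolding merging_configs_def by blast
  from z(2) have "z = (0, a, b)"
    by (cases rule: converse_rtranclpE) (auto simp: no_mstep_from_terminal[OF M])
  then show False
    using z(1) forever no_mstep_from_terminal[OF M] unfolding runs_forever_def by blast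
qed

subsection \<open>The separating functional\<close>

definition config_coeff_sum :: "config set \<Rightarrow> 'a::comm_ring_1 dpoly \<Rightarrow> 'a" where
  "config_coeff_sum C p =
     (\<Sum>m\<in>Poly_Mapping.keys p. if m \<in> config_monom ` C then Poly_Mapping.lookup p m else 0)"

lemma config_coeff_sum_eq_sum_over:
  assumes "finite F" "Poly_Mapping.keys p \<subseteq> F"
  shows "config_coeff_sum C p = (\<Sum>m\<in>F. if m \<in> config_monom ` C then Poly_Mapping.lookup p m else 0)"
  unfolding config_coeff_sum_def by (rule sum.mono_neutral_left[OF assms]) (auto simp: in_keys_iff)

lemma config_coeff_sum_add: "config_coeff_sum C (p + r) = config_coeff_sum C p + config_coeff_sum C r"
proof -
  let ?F = "Poly_Mapping.keys p \<union> Poly_Mapping.keys r"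
  have F: "finite ?F" by simp
  show ?thesis
    unfolding config_coeff_sum_eq_sum_over[OF F keys_add] config_coeff_sum_eq_sum_over[OF F Un_upper1]
      config_coeff_sum_eq_sum_over[OF F Un_upper2]
    by (simp add: sum.distrib[symmetric], intro sum.cong) (auto simp: lookup_add)
qed

lemma config_coeff_sum_0 [simp]: "config_coeff_sum C 0 = 0"
  by (simp add: config_coeff_sum_def)

lemma config_coeff_sum_diff: "config_coeff_sum C (p - r) = config_coeff_sum C p - config_coeff_sum C r"
  by (metis config_coeff_sum_add diff_add_cancel eq_diff_eq)

lemma config_coeff_sum_sum: "config_coeff_sum C (sum f K) = (\<Sum>k\<in>K. config_coeff_sum C (f k))"
  by (induction K rule: infinite_finite_induct) (auto simp: config_coeff_sum_add)

lemma config_monom_not_null: "\<not> null_monom (config_monom c)"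
proof -
  obtain i a b where "c = (i, a, b)" by (cases c)
  then have "Poly_Mapping.keys (config_monom c) \<subseteq> {(X1, 0, 0), (X2, 0, 0), (Q i, a, b)}"
    by (auto simp: in_keys_iff lookup_add lookup_single when_def split: if_splits)
  then show ?thesis unfolding null_monom_def by auto
qed

lemma config_coeff_sum_null_supported: "null_supported p \<Longrightarrow> config_coeff_sum C p = 0"
  unfolding config_coeff_sum_def supported_on_def
  by (rule sum.neutral) (use config_monom_not_null in auto)

lemma inj_config_monom: "inj config_monom"
proof
  fix c c' :: config
  assume eq: "config_monom c = config_monom c'"
  obtain i a b i' a' b' where c: "c = (i, a, b)" "c' = (i', a', b')" by (cases c, cases c')
  have "Poly_Mapping.lookup (config_monom c) (Q i, a, b) = 1"
    unfolding c by (simp add: lookup_add lookup_single)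
  then have "Poly_Mapping.lookup (config_monom (i', a', b')) (Q i, a, b) = 1"
    unfolding eq c(2) .
  then show "c = c'"
    unfolding c by (simp add: lookup_add lookup_single when_def split: if_splits)
qed

lemma config_coeff_sum_single:
  "config_coeff_sum C (Poly_Mapping.single (config_monom c) k) = (if c \<in> C then k else 0)"
  using inj_image_mem_iff[OF inj_config_monom]
  by (cases "k = 0") (simp_all add: config_coeff_sum_def)

lemma config_coeff_sum_generator:
  assumes M: "minsky_machine n M" and "c \<in> M" "inW (cmd_e c) (cmd_s c) a b"
  shows "config_coeff_sum (merging_configs M c0)
           (const k * actW (cmd_e c) (cmd_s c) a b (gcmd c)) = (0 :: 'a::comm_ring_1)"
proof -
  let ?C = "merging_configs M c0"
  let ?src = "config_monom (source_config c a b)" and ?tgt = "config_monom (target_config c a b)"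
  let ?g = "actW (cmd_e c) (cmd_s c) a b (gcmd c) :: 'a dpoly"
  have valid: "valid_cmd n c" using M assms(2) unfolding minsky_machine_def by blast
  have "const k * ?g = const k * (?g - (Poly_Mapping.single ?src 1 - Poly_Mapping.single ?tgt 1))
      + (Poly_Mapping.single ?src k - Poly_Mapping.single ?tgt k)"
    by (simp add: const_def mult_single algebra_simps)
  moreover have "null_supported (const k * (?g - (Poly_Mapping.single ?src 1 - Poly_Mapping.single ?tgt 1)))"
    using null_supported_actW_gcmd[OF valid assms(3)] by (rule null_supported_mult)
  moreover have "source_config c a b \<in> ?C \<longleftrightarrow> target_config c a b \<in> ?C"
    using merging_configs_step_iff[OF M mstep_source_target[OF assms(2) valid assms(3)]] .
  ultimately show ?thesis
    by (simp add: config_coeff_sum_add config_coeff_sum_diff config_coeff_sum_null_supported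
        config_coeff_sum_single)
qed

theorem lemma5:
  fixes n :: nat and M :: "cmd set" and S :: "nat set" and m :: nat
  assumes "1 \<le> n"
    and "minsky_machine n M"
    and "acyclic_machine M"
    and "\<forall>x. (x \<in> S \<longrightarrow> reaches M (1, 2 ^ (2 ^ x), 0) (0, 1, 0)) \<and>
             (x \<notin> S \<longrightarrow> runs_forever M (1, 2 ^ (2 ^ x), 0))"
    and "\<exists>K (coef :: cmd \<times> nat \<times> nat \<Rightarrow> 'a::comm_ring_1).
           finite K \<and>
           (\<forall>(c, a, b) \<in> K. c \<in> M \<and> inW (cmd_e c) (cmd_s c) a b) \<and>
           B_eq n (gm m)
             (\<Sum>(c, a, b) \<in> K. const (coef (c, a, b)) * actW (cmd_e c) (cmd_s c) a b (gcmd c))"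
  shows "m \<in> S"
proof (rule ccontr)
  assume "m \<notin> S"
  define c0 :: config where "c0 = (1, 2 ^ (2 ^ m), 0)"
  let ?C = "merging_configs M c0"
  have forever: "runs_forever M c0" using assms(4) \<open>m \<notin> S\<close> unfolding c0_def by blast
  obtain K and coef :: "cmd \<times> nat \<times> nat \<Rightarrow> 'a" where
    K: "\<forall>(c, a, b) \<in> K. c \<in> M \<and> inW (cmd_e c) (cmd_s c) a b"
    and in_J: "gm m - (\<Sum>(c, a, b) \<in> K. const (coef (c, a, b)) * actW (cmd_e c) (cmd_s c) a b (gcmd c)) \<in> J n"
    using assms(5) unfolding B_eq_def by blast
  have "config_coeff_sum ?C
      (\<Sum>(c, a, b) \<in> K. const (coef (c, a, b)) * actW (cmd_e c) (cmd_s c) a b (gcmd c)) = 0"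
    unfolding config_coeff_sum_sum
    by (rule sum.neutral) (use K config_coeff_sum_generator[OF assms(2)] in fast)
  moreover have "config_coeff_sum ?C (gm m) = (1 :: 'a)"
    using start_in_merging_configs[of c0 M] terminal_not_in_merging_configs[OF assms(2) forever]
    unfolding gm_def x1_x2_V_Q c0_def config_coeff_sum_diff config_coeff_sum_single by simp
  ultimately show False
    using config_coeff_sum_null_supported[OF J_null_supported[OF in_J]]
    by (simp add: config_coeff_sum_diff)
qed

end
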